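(* Let $G$ be an undirected weighted graph with at least one edge of positive weight. Then $\mathsf{OPT}^{\text{max-min}}(G)=\frac{\mathsf{OPT}_2(G)}{2}$.
   Context: Weighted modularity: $G=(V,E,\ell)$ is an undirected graph with nonnegative edge weights $\ell$; $a_{u,v}=\ell(u,v)$ if $\{u,v\}\in E$ and $0$ otherwise; $d_u=\sum_{v}a_{u,v}$ is the weighted degree, and $m=\frac12\sum_v d_v$. For $C\subseteq V$, $\mathsf M(C)=\frac{1}{2m}\sum_{u\in C}\sum_{v\in C}\big(a_{u,v}-\frac{d_ud_v}{2m}\big)$, the sum over all ordered pairs including $u=v$. A clustering is a partition $\mathcal S$ of $V$ into nonempty clusters. The sum modularity is $\mathsf M(\mathcal S)=\sum_{C\in\mathcal S}\mathsf M(C)$ and $\mathsf{OPT}_2$ is its maximum over clusterings with at most two clusters. The max-min modularity is $\mathsf M^{\text{max-min}}(\mathcal S)=\min_{C\in\mathcal S}\mathsf M(C)$, and $\mathsf{OPT}^{\text{max-min}}$ is its maximum over all clusterings (any number of clusters). *)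

theory Defs
  imports Main "HOL-Library.Disjoint_Sets" Complex_Main
begin

text \<open>A weighted undirected graph on a finite vertex set V is given by its
  weighted adjacency function a (a u v = weight of edge {u,v}, 0 if no edge);
  a is symmetric and nonnegative on V.\<close>

definition wdeg :: "'a set \<Rightarrow> ('a \<Rightarrow> 'a \<Rightarrow> real) \<Rightarrow> 'a \<Rightarrow> real" where
  "wdeg V a u = (\<Sum>v\<in>V. a u v)"

definition total_weight :: "'a set \<Rightarrow> ('a \<Rightarrow> 'a \<Rightarrow> real) \<Rightarrow> real" where
  "total_weight V a = (\<Sum>v\<in>V. wdeg V a v) / 2"

definition modularity :: "'a set \<Rightarrow> ('a \<Rightarrow> 'a \<Rightarrow> real) \<Rightarrow> 'a set \<Rightarrow> real" where
  "modularity V a C =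
     (let m = total_weight V a in
      (1 / (2 * m)) * (\<Sum>u\<in>C. \<Sum>v\<in>C. a u v - wdeg V a u * wdeg V a v / (2 * m)))"

definition clustering :: "'a set \<Rightarrow> 'a set set \<Rightarrow> bool" where
  "clustering V S = partition_on V S"

definition sum_modularity :: "'a set \<Rightarrow> ('a \<Rightarrow> 'a \<Rightarrow> real) \<Rightarrow> 'a set set \<Rightarrow> real" where
  "sum_modularity V a S = (\<Sum>C\<in>S. modularity V a C)"

definition maxmin_modularity :: "'a set \<Rightarrow> ('a \<Rightarrow> 'a \<Rightarrow> real) \<Rightarrow> 'a set set \<Rightarrow> real" where
  "maxmin_modularity V a S = Min (modularity V a ` S)"

definition OPT2 :: "'a set \<Rightarrow> ('a \<Rightarrow> 'a \<Rightarrow> real) \<Rightarrow> real" where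
  "OPT2 V a = Max {sum_modularity V a S | S. clustering V S \<and> card S \<le> 2}"

definition OPT_maxmin :: "'a set \<Rightarrow> ('a \<Rightarrow> 'a \<Rightarrow> real) \<Rightarrow> real" where
  "OPT_maxmin V a = Max {maxmin_modularity V a S | S. clustering V S}"

end

theory Submission
  imports Defs
begin

text \<open>Writing the modularity of a cluster as a double sum of the
  modularity matrix  B u v = a u v - d u d v / 2m,  every row of B sums to zero
  over V, and B is symmetric.  Hence the double sums of B over C and over V - C
  agree, i.e. a cluster and its complement have the same modularity, and V
  itself has modularity 0.  Consequently every clustering with at most two
  clusters, {V} or {C, V - C}, has all clusters of the same modularity, so its
  sum modularity is twice its minimum cluster modularity.  This gives
  OPT2 \<le> 2 OPT_maxmin.  Conversely, any cluster C of a clustering can be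
  completed to the bipartition {C, V - C} (or {V}) of sum modularity 2 M(C),
  so the minimum cluster modularity of any clustering is at most OPT2 / 2.
  The file first develops the modularity matrix and the complement symmetry,
  then elementary facts on clusterings and the two optima, and derives the
  theorem at the end.  The positive-weight edge is only used to make V nonempty.\<close>

definition mod_matrix :: "'a set \<Rightarrow> ('a \<Rightarrow> 'a \<Rightarrow> real) \<Rightarrow> 'a \<Rightarrow> 'a \<Rightarrow> real" where
  "mod_matrix V a u v = a u v - wdeg V a u * wdeg V a v / (2 * total_weight V a)"

lemma modularity_mod_matrix:
  "modularity V a C = (\<Sum>u\<in>C. \<Sum>v\<in>C. mod_matrix V a u v) / (2 * total_weight V a)"
  unfolding modularity_def mod_matrix_def Let_def by simp

text \<open>Every row of the modularity matrix sums to zero, since the degrees sum to 2m.\<close>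
lemma mod_matrix_row_sum:
  assumes "total_weight V a \<noteq> 0"
  shows "(\<Sum>v\<in>V. mod_matrix V a u v) = 0"
proof -
  have deg_sum: "(\<Sum>v\<in>V. wdeg V a v) = 2 * total_weight V a"
    unfolding total_weight_def by simp
  have "(\<Sum>v\<in>V. mod_matrix V a u v)
      = wdeg V a u - wdeg V a u * (\<Sum>v\<in>V. wdeg V a v) / (2 * total_weight V a)"
    unfolding mod_matrix_def
    by (simp add: sum_subtractf sum_divide_distrib[symmetric] sum_distrib_left wdeg_def)
  also have "\<dots> = 0"
    using assms by (simp add: deg_sum)
  finally show ?thesis .
qed

text \<open>For a symmetric kernel whose rows sum to zero over V, the double sums over
  a subset and over its complement coincide (both equal minus the cross sum).\<close>
lemma double_sum_complement:
  fixes f :: "'a \<Rightarrow> 'a \<Rightarrow> real"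
  assumes fin: "finite V" and CV: "C \<subseteq> V"
    and row: "\<And>u. (\<Sum>v\<in>V. f u v) = 0"
    and sym: "\<And>u v. u \<in> V \<Longrightarrow> v \<in> V \<Longrightarrow> f u v = f v u"
  shows "(\<Sum>u\<in>V - C. \<Sum>v\<in>V - C. f u v) = (\<Sum>u\<in>C. \<Sum>v\<in>C. f u v)"
proof -
  let ?D = "V - C"
  have split: "(\<Sum>v\<in>V. g v) = (\<Sum>v\<in>?D. g v) + (\<Sum>v\<in>C. g v)" for g :: "'a \<Rightarrow> real"
    using sum.subset_diff[OF CV fin] by simp
  have row_C: "(\<Sum>v\<in>C. f u v) = - (\<Sum>v\<in>?D. f u v)" for u
    using split[of "f u"] row[of u] by simp
  have row_D: "(\<Sum>v\<in>?D. f u v) = - (\<Sum>v\<in>C. f u v)" for u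
    using split[of "f u"] row[of u] by simp
  have in_C: "(\<Sum>u\<in>C. \<Sum>v\<in>C. f u v) = - (\<Sum>u\<in>C. \<Sum>v\<in>?D. f u v)"
    by (simp add: row_C sum_negf)
  have in_D: "(\<Sum>u\<in>?D. \<Sum>v\<in>?D. f u v) = - (\<Sum>u\<in>?D. \<Sum>v\<in>C. f u v)"
    by (simp add: row_D sum_negf)
  have cross: "(\<Sum>u\<in>?D. \<Sum>v\<in>C. f u v) = (\<Sum>u\<in>C. \<Sum>v\<in>?D. f u v)"
  proof -
    have "(\<Sum>u\<in>?D. \<Sum>v\<in>C. f u v) = (\<Sum>v\<in>C. \<Sum>u\<in>?D. f u v)"
      by (rule sum.swap)
    also have "\<dots> = (\<Sum>u\<in>C. \<Sum>v\<in>?D. f u v)"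
      using CV sym by (intro sum.cong refl) auto
    finally show ?thesis .
  qed
  show ?thesis
    using in_C in_D cross by simp
qed

lemma modularity_complement:
  assumes fin: "finite V" and CV: "C \<subseteq> V"
    and sym: "\<And>u v. u \<in> V \<Longrightarrow> v \<in> V \<Longrightarrow> a u v = a v u"
  shows "modularity V a (V - C) = modularity V a C"
proof (cases "total_weight V a = 0")
  case True
  then show ?thesis by (simp add: modularity_mod_matrix)
next
  case False
  have "(\<Sum>u\<in>V - C. \<Sum>v\<in>V - C. mod_matrix V a u v) = (\<Sum>u\<in>C. \<Sum>v\<in>C. mod_matrix V a u v)"
    using fin CV mod_matrix_row_sum[OF False] sym
    by (intro double_sum_complement) (auto simp: mod_matrix_def mult.commute)
  then show ?thesis by (simp add: modularity_mod_matrix)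
qed

text \<open>The whole vertex set has modularity zero, being the complement of the empty cluster.\<close>
lemma modularity_whole:
  assumes "finite V" and "\<And>u v. u \<in> V \<Longrightarrow> v \<in> V \<Longrightarrow> a u v = a v u"
  shows "modularity V a V = 0"
  using modularity_complement[of V "{}" a] assms by (simp add: modularity_def)

lemma clustering_bipartition:
  assumes "C \<subseteq> V" "C \<noteq> {}" "C \<noteq> V"
  shows "clustering V {C, V - C}"
  using assms unfolding clustering_def partition_on_def disjoint_def by auto

text \<open>In a clustering with at most two clusters all clusters have the same
  modularity, so the sum modularity is twice the modularity of any cluster.\<close>
lemma sum_modularity_two_clusters:
  assumes fin: "finite V" and sym: "\<And>u v. u \<in> V \<Longrightarrow> v \<in> V \<Longrightarrow> a u v = a v u"
    and S: "clustering V S" "card S \<le> 2" and C: "C \<in> S"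
  shows "sum_modularity V a S = 2 * modularity V a C"
proof -
  have part: "\<Union>S = V" "disjoint S" "{} \<notin> S"
    using S(1) unfolding clustering_def partition_on_def by auto
  have finS: "finite S"
    using finite_elements[OF fin] S(1) unfolding clustering_def by blast
  have "card S \<noteq> 0" using finS C by auto
  then consider "card S = 1" | "card S = 2" using S(2) by linarith
  then show ?thesis
  proof cases
    case 1
    then have "S = {C}" using C by (metis card_1_singletonE singletonD)
    then have "C = V" using part(1) by auto
    then show ?thesis using \<open>S = {C}\<close> modularity_whole[OF fin sym]
      by (simp add: sum_modularity_def)
  next
    case 2
    then have "card (S - {C}) = 1" using C finS by simp
    then obtain D where "S - {C} = {D}" by (elim card_1_singletonE)
    then have S_eq: "S = {C, D}" and "D \<noteq> C" using C by auto
    then have "C \<inter> D = {}" using part(2) unfolding disjoint_def by auto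
    then have D: "D = V - C" and CV: "C \<subseteq> V" using part(1) S_eq by auto
    show ?thesis using S_eq \<open>D \<noteq> C\<close> modularity_complement[OF fin CV sym]
      by (simp add: sum_modularity_def D)
  qed
qed

lemma two_clustering_containing:
  assumes "C \<subseteq> V" "C \<noteq> {}"
  shows "\<exists>S. clustering V S \<and> card S \<le> 2 \<and> C \<in> S"
proof (cases "C = V")
  case True
  then show ?thesis
    using assms partition_on_space[of V] unfolding clustering_def by (intro exI[of _ "{V}"]) auto
next
  case False
  then show ?thesis
    using assms clustering_bipartition by (intro exI[of _ "{C, V - C}"]) (auto simp: card_insert_if)
qed

lemma maxmin_modularity_attained:
  assumes "finite V" "V \<noteq> {}" "clustering V S"
  shows "\<exists>C\<in>S. maxmin_modularity V a S = modularity V a C"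
proof -
  have "S \<noteq> {}" using assms(2,3) unfolding clustering_def partition_on_def by auto
  then have "Min (modularity V a ` S) \<in> modularity V a ` S"
    using finite_elements[OF assms(1)] assms(3) unfolding clustering_def by (intro Min_in) auto
  then show ?thesis unfolding maxmin_modularity_def by auto
qed

lemma OPT2_attained_and_max:
  assumes "finite V" "V \<noteq> {}"
  shows "\<exists>S. clustering V S \<and> card S \<le> 2 \<and> OPT2 V a = sum_modularity V a S"
    and "clustering V S \<Longrightarrow> card S \<le> 2 \<Longrightarrow> sum_modularity V a S \<le> OPT2 V a"
proof -
  let ?A = "{sum_modularity V a S | S. clustering V S \<and> card S \<le> 2}"
  have "finite ?A"
    using finitely_many_partition_on[OF assms(1)] unfolding clustering_def
    by (rule finite_subset[rotated, OF finite_imageI]) auto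
  moreover have "?A \<noteq> {}"
    using two_clustering_containing[of V V] assms(2) by auto
  ultimately show "\<exists>S. clustering V S \<and> card S \<le> 2 \<and> OPT2 V a = sum_modularity V a S"
    and "clustering V S \<Longrightarrow> card S \<le> 2 \<Longrightarrow> sum_modularity V a S \<le> OPT2 V a"
    unfolding OPT2_def using Max_in[of ?A] by (auto intro!: Max_ge)
qed

lemma OPT_maxmin_attained_and_max:
  assumes "finite V" "V \<noteq> {}"
  shows "\<exists>S. clustering V S \<and> OPT_maxmin V a = maxmin_modularity V a S"
    and "clustering V S \<Longrightarrow> maxmin_modularity V a S \<le> OPT_maxmin V a"
proof -
  let ?A = "{maxmin_modularity V a S | S. clustering V S}"
  have "finite ?A"
    using finitely_many_partition_on[OF assms(1)] unfolding clustering_def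
    by (rule finite_subset[rotated, OF finite_imageI]) auto
  moreover have "?A \<noteq> {}"
    using two_clustering_containing[of V V] assms(2) by auto
  ultimately show "\<exists>S. clustering V S \<and> OPT_maxmin V a = maxmin_modularity V a S"
    and "clustering V S \<Longrightarrow> maxmin_modularity V a S \<le> OPT_maxmin V a"
    unfolding OPT_maxmin_def using Max_in[of ?A] by (auto intro!: Max_ge)
qed

theorem lemma12:
  fixes V :: "'a set" and a :: "'a \<Rightarrow> 'a \<Rightarrow> real"
  assumes "finite V"
    and "\<And>u v. u \<in> V \<Longrightarrow> v \<in> V \<Longrightarrow> a u v \<ge> 0"
    and "\<And>u v. u \<in> V \<Longrightarrow> v \<in> V \<Longrightarrow> a u v = a v u"
    and "\<exists>u\<in>V. \<exists>v\<in>V. a u v > 0"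
  shows "OPT_maxmin V a = OPT2 V a / 2"
proof -
  note fin = assms(1) and a_sym = assms(3)
  have V: "V \<noteq> {}" using assms(4) by auto
  have "OPT_maxmin V a \<le> OPT2 V a / 2"
  proof -
    obtain S where S: "clustering V S" and opt: "OPT_maxmin V a = maxmin_modularity V a S"
      using OPT_maxmin_attained_and_max(1)[OF fin V] by blast
    obtain C where C: "C \<in> S" "maxmin_modularity V a S = modularity V a C"
      using maxmin_modularity_attained[OF fin V S] by blast
    have "C \<subseteq> V" "C \<noteq> {}" using S C(1) unfolding clustering_def partition_on_def by auto
    then obtain T where T: "clustering V T" "card T \<le> 2" "C \<in> T"
      using two_clustering_containing by blast
    have "2 * modularity V a C \<le> OPT2 V a"
      using sum_modularity_two_clusters[where a=a, OF fin a_sym T]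
        OPT2_attained_and_max(2)[where a=a, OF fin V T(1,2)] by linarith
    then show ?thesis using opt C(2) by simp
  qed
  moreover have "OPT2 V a \<le> 2 * OPT_maxmin V a"
  proof -
    obtain S where S: "clustering V S" "card S \<le> 2" and opt: "OPT2 V a = sum_modularity V a S"
      using OPT2_attained_and_max(1)[OF fin V] by blast
    obtain C where C: "C \<in> S" "maxmin_modularity V a S = modularity V a C"
      using maxmin_modularity_attained[OF fin V S(1)] by blast
    show ?thesis
      using opt sum_modularity_two_clusters[where a=a, OF fin a_sym S C(1)] C(2)
        OPT_maxmin_attained_and_max(2)[where a=a, OF fin V S(1)] by linarith
  qed
  ultimately show ?thesis by simp
qed

end
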